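(* For all nonnegative integers $a_1,a_2,s$, \[ F(a_1,a_2,s)=a_1!\,a_2!\,G(a_1,a_2,s). \]
   Context: Let $a_1,a_2,s$ be nonnegative integers and $a=a_1+a_2$. $F(a_1,a_2,s)$ is the number of pairs $(X,w)$ where $X\subseteq[a]$ has $|X|=a-s$ (so $F=0$ if $s>a$) and $w=(w_1,\dots,w_a)$ is a sequence listing each element of $X\cup\{a+1,\dots,a+s\}$ exactly once, such that if one rearranges $w_1,\dots,w_{a_1}$ in decreasing order and $w_{a_1+1},\dots,w_a$ in decreasing order, the resulting sequence $u$ satisfies $u_i\ne i$ for all $i\in[a]$. For integers $a_1,a_2,s$, $G(a_1,a_2,s)=\sum_m N_m$, the sum over integers $m$ such that $a_1-m,\ a_2-(s-m),\ m,\ s-m$ are all nonnegative (an empty sum is $0$), where $N_m$ is the number of permutations $\pi$ of $[a]$ that are decreasing within each of four consecutive blocks of positions of lengths $a_1-m,\ a_2-(s-m),\ m,\ s-m$ (in this order; arbitrary between blocks), and have no fixed point ($\pi_i=i$) in the first two blocks. *)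

theory Defs
  imports "HOL-Combinatorics.Permutations"
begin

definition blocksort :: "nat \<Rightarrow> nat list \<Rightarrow> nat list" where
  "blocksort a1 w = rev (sort (take a1 w)) @ rev (sort (drop a1 w))"

text \<open>F(a1,a2,s): number of pairs (X,w). Positions are 1-indexed in the paper;
u_i corresponds to (u ! (i-1)).\<close>
definition F :: "nat \<Rightarrow> nat \<Rightarrow> nat \<Rightarrow> nat" where
  "F a1 a2 s = (let a = a1 + a2 in
     card {(X, w). X \<subseteq> {1..a} \<and> s \<le> a \<and> card X = a - s \<and>
        length w = a \<and> distinct w \<and> set w = X \<union> {a+1..a+s} \<and>
        (\<forall>i\<in>{1..a}. blocksort a1 w ! (i - 1) \<noteq> i)})"

definition same_block :: "nat \<Rightarrow> nat \<Rightarrow> nat \<Rightarrow> nat \<Rightarrow> nat \<Rightarrow> nat \<Rightarrow> bool" where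
  "same_block l1 l2 l3 l4 i j \<longleftrightarrow>
     (i \<in> {1..l1} \<and> j \<in> {1..l1}) \<or>
     (i \<in> {l1+1..l1+l2} \<and> j \<in> {l1+1..l1+l2}) \<or>
     (i \<in> {l1+l2+1..l1+l2+l3} \<and> j \<in> {l1+l2+1..l1+l2+l3}) \<or>
     (i \<in> {l1+l2+l3+1..l1+l2+l3+l4} \<and> j \<in> {l1+l2+l3+1..l1+l2+l3+l4})"

definition Ncount :: "nat \<Rightarrow> nat \<Rightarrow> nat \<Rightarrow> nat \<Rightarrow> nat" where
  "Ncount l1 l2 l3 l4 = (let a = l1 + l2 + l3 + l4 in
     card {\<pi>. \<pi> permutes {1..a} \<and>
        (\<forall>i\<in>{1..a}. \<forall>j\<in>{1..a}. i < j \<and> same_block l1 l2 l3 l4 i j \<longrightarrow> \<pi> i > \<pi> j) \<and>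
        (\<forall>i\<in>{1..l1+l2}. \<pi> i \<noteq> i)})"

definition G :: "nat \<Rightarrow> nat \<Rightarrow> nat \<Rightarrow> nat" where
  "G a1 a2 s = (\<Sum>m\<in>{m. m \<le> s \<and> m \<le> a1 \<and> s - m \<le> a2}.
                   Ncount (a1 - m) (a2 - (s - m)) m (s - m))"

end

theory Submission
  imports Defs "HOL-Combinatorics.Multiset_Permutations"
begin

text \<open>Listing a set \<open>X\<close> decreasingly in the positions \<open>c + 1, c + 2, \<dots>\<close> creates no fixed point
  unless some \<open>v \<in> X\<close> equals \<open>c + 1\<close> plus the number of larger elements of \<open>X\<close>. Only the sets of
  entries of the two blocks of \<open>w\<close> matter in \<open>F\<close>, which accounts for the factor \<open>a1! a2!\<close>;
  a block-decreasing permutation counted by \<open>N_m\<close> is determined by the images of its blocks.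
  Splitting the first block of \<open>w\<close> into its \<open>m\<close> entries above \<open>a = a1 + a2\<close> and the rest,
  both sides become sums over \<open>m\<close> of \<open>s choose m\<close> times the number of disjoint pairs of subsets of
  \<open>[a]\<close> of sizes \<open>a1 - m\<close> and \<open>a2 - (s - m)\<close> whose decreasing listings at given offsets have no
  fixed points: with offsets \<open>(m, a1 - m + s)\<close> for \<open>F\<close> and \<open>(0, a1 - m)\<close> for \<open>G\<close>. These counts
  agree: removing the largest element of \<open>[a]\<close>, or by the symmetry \<open>v \<mapsto> a + 1 - v\<close> the
  smallest one, gives recurrences showing by induction on \<open>a\<close> that moving the first block of
  positions by one leaves the count unchanged while it stays below the second block.\<close>

section \<open>Decreasing listings and their fixed points\<close>

definition dec_list :: "nat set \<Rightarrow> nat list" where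
  "dec_list S = rev (sorted_list_of_set S)"

lemma dec_list_basic:
  assumes "finite S"
  shows "length (dec_list S) = card S" "set (dec_list S) = S" "distinct (dec_list S)"
  using assms by (auto simp: dec_list_def)

lemma dec_list_nth_less:
  assumes "finite S" "i < j" "j < card S"
  shows "dec_list S ! j < dec_list S ! i"
proof -
  let ?L = "sorted_list_of_set S"
  have "length ?L = card S" "sorted_wrt (<) ?L"
    using assms(1) by auto
  then show ?thesis
    using assms by (auto simp: dec_list_def rev_nth sorted_wrt_iff_nth_less)
qed

lemma card_greater_dec_list_nth:
  assumes "finite S" "j < card S"
  shows "card {x\<in>S. dec_list S ! j < x} = j"
proof -
  have inj: "inj_on (\<lambda>i. dec_list S ! i) {..<card S}"
    using assms(1) by (auto simp: inj_on_def nth_eq_iff_index_eq dec_list_basic)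
  have "S = (\<lambda>i. dec_list S ! i) ` {..<card S}"
    using assms(1) nth_image[of "card S" "dec_list S"] by (simp add: dec_list_basic lessThan_atLeast0)
  then have "{x\<in>S. dec_list S ! j < x} = (\<lambda>i. dec_list S ! i) ` {i. i < card S \<and> dec_list S ! j < dec_list S ! i}"
    by auto
  also have "{i. i < card S \<and> dec_list S ! j < dec_list S ! i} = {..<j}"
    using assms dec_list_nth_less[OF assms(1)] by (auto, metis less_asym linorder_neqE_nat)
  finally show ?thesis
    using assms inj_on_subset[OF inj] by (simp add: card_image)
qed

lemma dec_list_image:
  assumes "strict_antimono_on {c+1..c+k} f"
  shows "dec_list (f ` {c+1..c+k}) = map f [c+1..<c+k+1]"
proof -
  let ?xs = "map f (rev [c+1..<c+k+1])"
  have "sorted_wrt (<) ?xs"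
    using assms unfolding sorted_wrt_map sorted_wrt_rev
    by (auto simp: sorted_wrt_iff_nth_less monotone_on_def simp del: upt_Suc)
  moreover have "inj_on f {c+1..c+k}"
    using assms by (metis strict_antimono_iff_antimono)
  ultimately have "sorted_list_of_set (f ` {c+1..c+k}) = ?xs"
    by (intro sorted_list_of_set_unique[THEN iffD1]) (auto simp: card_image)
  then show ?thesis by (simp add: dec_list_def rev_map)
qed

text \<open>In the decreasing listing of \<open>X\<close> at positions \<open>c + 1, c + 2, \<dots>\<close> the element \<open>v\<close> sits in
  position \<open>c + 1 + #{x \<in> X. v < x}\<close>. The offset is an integer because the reflection
  \<open>v \<mapsto> n + 1 - v\<close> below produces negative offsets.\<close>

definition fp_free :: "int \<Rightarrow> nat set \<Rightarrow> bool" where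
  "fp_free c X \<longleftrightarrow> (\<forall>v\<in>X. int v \<noteq> c + 1 + int (card {x\<in>X. v < x}))"

lemma fp_free_iff_dec_list:
  assumes "finite S"
  shows "fp_free (int c) S \<longleftrightarrow> (\<forall>j<card S. dec_list S ! j \<noteq> c + 1 + j)"
proof -
  have "(\<forall>v\<in>S. Q v) \<longleftrightarrow> (\<forall>j<card S. Q (dec_list S ! j))" for Q
    using all_set_conv_all_nth[of "dec_list S" Q] dec_list_basic[OF assms] by simp
  then show ?thesis
    unfolding fp_free_def by (auto simp: card_greater_dec_list_nth[OF assms])
qed

lemma fp_free_Un_above:
  assumes "finite B" "finite X" "\<forall>b\<in>B. \<forall>x\<in>X. x < b"
  shows "fp_free c (B \<union> X) \<longleftrightarrow> fp_free c B \<and> fp_free (c + int (card B)) X"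
proof -
  have "{x\<in>B \<union> X. v < x} = {x\<in>B. v < x}" if "v \<in> B" for v
    using that assms(3) by fastforce
  then have B: "(\<forall>v\<in>B. int v \<noteq> c + 1 + int (card {x\<in>B \<union> X. v < x})) \<longleftrightarrow> fp_free c B"
    unfolding fp_free_def by simp
  have "card {x\<in>B \<union> X. v < x} = card B + card {x\<in>X. v < x}" if "v \<in> X" for v
  proof -
    have "{x\<in>B \<union> X. v < x} = B \<union> {x\<in>X. v < x}" using that assms(3) by auto
    moreover have "B \<inter> {x\<in>X. v < x} = {}" using assms(3) by auto
    ultimately show ?thesis using assms(1,2) by (simp add: card_Un_disjoint)
  qed
  then have X: "(\<forall>v\<in>X. int v \<noteq> c + 1 + int (card {x\<in>B \<union> X. v < x})) \<longleftrightarrow>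
      fp_free (c + int (card B)) X"
    unfolding fp_free_def by (simp add: algebra_simps)
  show ?thesis
    using B X unfolding fp_free_def[of c "B \<union> X"] by blast
qed

lemma fp_free_singleton: "fp_free c {v} \<longleftrightarrow> int v \<noteq> c + 1"
proof -
  have "{x\<in>{v}. v < x} = {}" by auto
  then show ?thesis unfolding fp_free_def by (simp only: ball_simps card.empty) simp
qed

lemma fp_free_if_below: "\<forall>v\<in>X. int v \<le> c \<Longrightarrow> fp_free c X"
  unfolding fp_free_def by force

lemma fp_free_if_above:
  assumes "finite X" "\<forall>v\<in>X. c + int (card X) < int v"
  shows "fp_free c X"
proof -
  have "card {x\<in>X. v < x} < card X" if "v \<in> X" for v
    using that assms(1) by (intro psubset_card_mono) auto
  then show ?thesis
    using assms(2) unfolding fp_free_def by force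
qed

lemma fp_free_Un_high:
  assumes "finite B" "finite X" "\<forall>x\<in>X. x \<le> n" "\<forall>b\<in>B. n < b" "c + int (card B) \<le> int n"
  shows "fp_free c (B \<union> X) \<longleftrightarrow> fp_free (c + int (card B)) X"
proof -
  have "fp_free c B" using assms(1,4,5) by (intro fp_free_if_above) force+
  moreover have "\<forall>b\<in>B. \<forall>x\<in>X. x < b" using assms(3,4) by force
  ultimately show ?thesis using fp_free_Un_above[OF assms(1,2)] by blast
qed

definition mirror :: "nat \<Rightarrow> nat set \<Rightarrow> nat set" where
  "mirror n X = (\<lambda>v. Suc n - v) ` X"

lemma inj_on_mirror_map: "inj_on (\<lambda>v. Suc n - v) {1..n}"
  by (rule inj_onI) auto

lemma mirror_basic:
  assumes "X \<subseteq> {1..n}"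
  shows "mirror n X \<subseteq> {1..n}" "mirror n (mirror n X) = X" "card (mirror n X) = card X"
proof -
  show "mirror n X \<subseteq> {1..n}" using assms by (force simp: mirror_def)
  have "\<forall>v\<in>X. Suc n - (Suc n - v) = v" using assms by auto
  then show "mirror n (mirror n X) = X" by (simp add: mirror_def image_image)
  show "card (mirror n X) = card X"
    unfolding mirror_def using assms by (intro card_image inj_on_subset[OF inj_on_mirror_map])
qed

lemma mirror_disjoint:
  "X \<subseteq> {1..n} \<Longrightarrow> Y \<subseteq> {1..n} \<Longrightarrow> X \<inter> Y = {} \<Longrightarrow> mirror n X \<inter> mirror n Y = {}"
  unfolding mirror_def by (simp add: inj_on_image_Int[OF inj_on_mirror_map, symmetric])

text \<open>Under \<open>v \<mapsto> n + 1 - v\<close> the elements larger than \<open>v\<close> become the smaller ones, whence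
  the new offset.\<close>

lemma fp_free_mirror:
  assumes X: "X \<subseteq> {1..n}"
  shows "fp_free (int n - int (card X) - c) (mirror n X) \<longleftrightarrow> fp_free c X"
proof -
  have fin: "finite X" using X finite_subset by blast
  have larger: "card {x\<in>mirror n X. Suc n - v < x} = card {x\<in>X. x < v}" if v: "v \<in> X" for v
  proof -
    have "{x\<in>mirror n X. Suc n - v < x} = (\<lambda>v. Suc n - v) ` {x\<in>X. x < v}"
      using X v unfolding mirror_def by auto
    moreover have "inj_on (\<lambda>v. Suc n - v) {x\<in>X. x < v}"
      using X by (blast intro: inj_on_subset[OF inj_on_mirror_map])
    ultimately show ?thesis by (simp add: card_image)
  qed
  have split: "card {x\<in>X. x < v} + card {x\<in>X. v < x} + 1 = card X" if v: "v \<in> X" for v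
  proof -
    have "X = insert v ({x\<in>X. x < v} \<union> {x\<in>X. v < x})" using v by auto
    then have "card X = card (insert v ({x\<in>X. x < v} \<union> {x\<in>X. v < x}))"
      by (rule arg_cong)
    also have "\<dots> = card {x\<in>X. x < v} + card {x\<in>X. v < x} + 1"
      using fin by (subst card_Un_disjoint[symmetric]) auto
    finally show ?thesis by simp
  qed
  have pointwise: "(int (Suc n - v) \<noteq> int n - int (card X) - c + 1 + int (card {x\<in>mirror n X. Suc n - v < x}))
      \<longleftrightarrow> (int v \<noteq> c + 1 + int (card {x\<in>X. v < x}))" if v: "v \<in> X" for v
  proof -
    have "int (Suc n - v) = int n + 1 - int v" using v X by auto
    then show ?thesis using larger[OF v] split[OF v] by linarith
  qed
  have "fp_free c' (mirror n X) \<longleftrightarrow>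
      (\<forall>v\<in>X. int (Suc n - v) \<noteq> c' + 1 + int (card {x\<in>mirror n X. Suc n - v < x}))" for c'
    unfolding fp_free_def by (simp only: mirror_def[of n X] ball_simps(9))
  then show ?thesis
    unfolding fp_free_def[of c X] using pointwise by (simp cong: ball_cong)
qed

lemma fp_free_remove_max:
  assumes "X \<subseteq> {1..Suc n}" "Suc n \<in> X"
  shows "fp_free c X \<longleftrightarrow> int (Suc n) \<noteq> c + 1 \<and> fp_free (c + 1) (X - {Suc n})"
proof -
  have "X = {Suc n} \<union> (X - {Suc n})" using assms(2) by auto
  moreover have "finite (X - {Suc n})" using assms(1) finite_subset by blast
  moreover have "\<forall>b\<in>{Suc n}. \<forall>x\<in>X - {Suc n}. x < b" using assms(1) by fastforce
  ultimately show ?thesis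
    using fp_free_Un_above[of "{Suc n}" "X - {Suc n}" c] by (simp add: fp_free_singleton)
qed

section \<open>Counting pairs of fixed point free sets\<close>

definition fp_free_pairs :: "nat \<Rightarrow> nat \<Rightarrow> nat \<Rightarrow> int \<Rightarrow> int \<Rightarrow> (nat set \<times> nat set) set" where
  "fp_free_pairs n k1 k2 c1 c2 = {(X1, X2). X1 \<subseteq> {1..n} \<and> X2 \<subseteq> {1..n} \<and> X1 \<inter> X2 = {} \<and>
      card X1 = k1 \<and> card X2 = k2 \<and> fp_free c1 X1 \<and> fp_free c2 X2}"

definition pair_count :: "nat \<Rightarrow> nat \<Rightarrow> nat \<Rightarrow> int \<Rightarrow> int \<Rightarrow> nat" where
  "pair_count n k1 k2 c1 c2 = card (fp_free_pairs n k1 k2 c1 c2)"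

lemma finite_fp_free_pairs: "finite (fp_free_pairs n k1 k2 c1 c2)"
  by (rule finite_subset[of _ "Pow {1..n} \<times> Pow {1..n}"]) (auto simp: fp_free_pairs_def)

lemma fp_free_pairs_swap:
  "fp_free_pairs n k2 k1 c2 c1 = prod.swap ` fp_free_pairs n k1 k2 c1 c2"
  unfolding fp_free_pairs_def by auto

lemma pair_count_swap: "pair_count n k1 k2 c1 c2 = pair_count n k2 k1 c2 c1"
  unfolding pair_count_def fp_free_pairs_swap[of n k1 k2 c1 c2] by (simp add: card_image)

lemma fp_free_pairs_max_in_first:
  assumes "0 < k1" "int (Suc n) \<noteq> c1 + 1"
  shows "{p \<in> fp_free_pairs (Suc n) k1 k2 c1 c2. Suc n \<in> fst p} =
    (\<lambda>(X1, X2). (insert (Suc n) X1, X2)) ` fp_free_pairs n (k1 - 1) k2 (c1 + 1) c2"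
proof (intro equalityI subsetI)
  fix p assume "p \<in> {p \<in> fp_free_pairs (Suc n) k1 k2 c1 c2. Suc n \<in> fst p}"
  then obtain X1 X2 where p: "p = (X1, X2)" "X1 \<subseteq> {1..Suc n}" "X2 \<subseteq> {1..Suc n}"
    "X1 \<inter> X2 = {}" "card X1 = k1" "card X2 = k2" "fp_free c1 X1" "fp_free c2 X2" "Suc n \<in> X1"
    unfolding fp_free_pairs_def by auto
  have "(X1 - {Suc n}, X2) \<in> fp_free_pairs n (k1 - 1) k2 (c1 + 1) c2"
    using p fp_free_remove_max[OF p(2,9)] finite_subset[OF p(2)]
    unfolding fp_free_pairs_def by (auto simp: subset_iff le_Suc_eq)
  moreover have "p = (insert (Suc n) (X1 - {Suc n}), X2)" using p by auto
  ultimately show "p \<in> (\<lambda>(X1, X2). (insert (Suc n) X1, X2)) ` fp_free_pairs n (k1 - 1) k2 (c1 + 1) c2"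
    by force
next
  fix p assume "p \<in> (\<lambda>(X1, X2). (insert (Suc n) X1, X2)) ` fp_free_pairs n (k1 - 1) k2 (c1 + 1) c2"
  then obtain X1 X2 where p: "p = (insert (Suc n) X1, X2)" "X1 \<subseteq> {1..n}" "X2 \<subseteq> {1..n}"
    "X1 \<inter> X2 = {}" "card X1 = k1 - 1" "card X2 = k2" "fp_free (c1 + 1) X1" "fp_free c2 X2"
    unfolding fp_free_pairs_def by auto
  have "insert (Suc n) X1 \<subseteq> {1..Suc n}" "Suc n \<notin> X1" using p(2) by auto
  moreover have "finite X1" using p(2) finite_subset by blast
  ultimately show "p \<in> {p \<in> fp_free_pairs (Suc n) k1 k2 c1 c2. Suc n \<in> fst p}"
    using p assms fp_free_remove_max[of "insert (Suc n) X1" n c1]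
    unfolding fp_free_pairs_def by auto
qed

lemma card_fp_free_pairs_max_in_first:
  "card {p \<in> fp_free_pairs (Suc n) k1 k2 c1 c2. Suc n \<in> fst p} =
     (if 0 < k1 \<and> int (Suc n) \<noteq> c1 + 1 then pair_count n (k1 - 1) k2 (c1 + 1) c2 else 0)"
proof (cases "0 < k1 \<and> int (Suc n) \<noteq> c1 + 1")
  case True
  have "inj_on (\<lambda>(X1, X2). (insert (Suc n) X1, X2)) (fp_free_pairs n (k1 - 1) k2 (c1 + 1) c2)"
    by (rule inj_onI) (clarsimp simp: fp_free_pairs_def, metis insert_ident atLeastAtMost_iff
        not_less_eq_eq order_refl subsetD)
  then show ?thesis
    using True by (simp add: fp_free_pairs_max_in_first card_image pair_count_def)
next
  case False
  have "(X1, X2) \<notin> fp_free_pairs (Suc n) k1 k2 c1 c2" if "Suc n \<in> X1" for X1 X2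
  proof
    assume "(X1, X2) \<in> fp_free_pairs (Suc n) k1 k2 c1 c2"
    then have X1: "X1 \<subseteq> {1..Suc n}" "card X1 = k1" "fp_free c1 X1"
      unfolding fp_free_pairs_def by auto
    then have "0 < k1" using that finite_subset[OF X1(1)] by (auto simp: card_gt_0_iff)
    then show False using False X1 fp_free_remove_max[OF X1(1) that] by simp
  qed
  then have "{p \<in> fp_free_pairs (Suc n) k1 k2 c1 c2. Suc n \<in> fst p} = {}" by auto
  then show ?thesis using False by (simp only: if_not_P if_False card.empty)
qed

lemma pair_count_Suc:
  "pair_count (Suc n) k1 k2 c1 c2 = pair_count n k1 k2 c1 c2
     + (if 0 < k1 \<and> int (Suc n) \<noteq> c1 + 1 then pair_count n (k1 - 1) k2 (c1 + 1) c2 else 0)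
     + (if 0 < k2 \<and> int (Suc n) \<noteq> c2 + 1 then pair_count n k1 (k2 - 1) c1 (c2 + 1) else 0)"
proof -
  let ?P = "fp_free_pairs (Suc n) k1 k2 c1 c2"
  let ?none = "{p \<in> ?P. Suc n \<notin> fst p \<and> Suc n \<notin> snd p}"
  let ?first = "{p \<in> ?P. Suc n \<in> fst p}" and ?second = "{p \<in> ?P. Suc n \<in> snd p}"
  have "?none \<inter> ?first = {}" "(?none \<union> ?first) \<inter> ?second = {}"
    by (auto simp: fp_free_pairs_def)
  moreover have "finite ?none" "finite ?first" "finite ?second"
    using finite_fp_free_pairs by auto
  ultimately have "card (?none \<union> ?first \<union> ?second) = card ?none + card ?first + card ?second"
    by (simp only: card_Un_disjoint finite_Un)
  moreover have "?none \<union> ?first \<union> ?second = ?P" by auto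
  ultimately have split: "card ?P = card ?none + card ?first + card ?second"
    by (simp only:)
  have none: "?none = fp_free_pairs n k1 k2 c1 c2"
    unfolding fp_free_pairs_def by (auto simp: subset_iff le_Suc_eq)
  have "{p \<in> fp_free_pairs (Suc n) k2 k1 c2 c1. Suc n \<in> fst p} = prod.swap ` ?second"
    unfolding fp_free_pairs_swap[of "Suc n" k1 k2 c1 c2] by force
  then have second: "card ?second = card {p \<in> fp_free_pairs (Suc n) k2 k1 c2 c1. Suc n \<in> fst p}"
    by (simp add: card_image)
  show ?thesis
    unfolding pair_count_def[of "Suc n"] split none second card_fp_free_pairs_max_in_first
    using pair_count_swap[of n "k2 - 1" k1 "c2 + 1" c1] by (simp add: pair_count_def)
qed

lemma mirror_pair_mem:
  assumes "p \<in> fp_free_pairs n k1 k2 c1 c2"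
  shows "map_prod (mirror n) (mirror n) p \<in>
    fp_free_pairs n k1 k2 (int n - int k1 - c1) (int n - int k2 - c2)"
proof -
  obtain X1 X2 where p: "p = (X1, X2)" "X1 \<subseteq> {1..n}" "X2 \<subseteq> {1..n}" "X1 \<inter> X2 = {}"
    "card X1 = k1" "card X2 = k2" "fp_free c1 X1" "fp_free c2 X2"
    using assms unfolding fp_free_pairs_def by auto
  then show ?thesis
    using fp_free_mirror[OF p(2), of c1] fp_free_mirror[OF p(3), of c2] mirror_basic[OF p(2)]
      mirror_basic[OF p(3)] mirror_disjoint[OF p(2-4)]
    unfolding fp_free_pairs_def by simp
qed

lemma pair_count_mirror:
  "pair_count n k1 k2 c1 c2 = pair_count n k1 k2 (int n - int k1 - c1) (int n - int k2 - c2)"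
  unfolding pair_count_def
proof (rule bij_betw_same_card, rule bij_betw_byWitness[where f' = "map_prod (mirror n) (mirror n)"])
  show "map_prod (mirror n) (mirror n) ` fp_free_pairs n k1 k2 c1 c2 \<subseteq>
      fp_free_pairs n k1 k2 (int n - int k1 - c1) (int n - int k2 - c2)"
    by (rule image_subsetI) (rule mirror_pair_mem)
  show "map_prod (mirror n) (mirror n) ` fp_free_pairs n k1 k2 (int n - int k1 - c1) (int n - int k2 - c2)
      \<subseteq> fp_free_pairs n k1 k2 c1 c2"
    using mirror_pair_mem[of _ n k1 k2 "int n - int k1 - c1" "int n - int k2 - c2"] by auto
qed (auto simp: fp_free_pairs_def mirror_basic)

text \<open>The recurrence of \<open>pair_count_Suc\<close> transported through \<open>pair_count_mirror\<close>: it removes the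
  smallest element \<open>1\<close> instead of the largest.\<close>

lemma pair_count_Suc_bottom:
  "pair_count (Suc n) k1 k2 c1 c2 = pair_count n k1 k2 (c1 - 1) (c2 - 1)
     + (if 0 < k1 \<and> c1 + int k1 \<noteq> 1 then pair_count n (k1 - 1) k2 (c1 - 1) (c2 - 1) else 0)
     + (if 0 < k2 \<and> c2 + int k2 \<noteq> 1 then pair_count n k1 (k2 - 1) (c1 - 1) (c2 - 1) else 0)"
proof -
  define d1 where "d1 = int (Suc n) - int k1 - c1"
  define d2 where "d2 = int (Suc n) - int k2 - c2"
  have "pair_count (Suc n) k1 k2 c1 c2 = pair_count (Suc n) k1 k2 d1 d2"
    unfolding d1_def d2_def by (rule pair_count_mirror)
  also have "\<dots> = pair_count n k1 k2 d1 d2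
     + (if 0 < k1 \<and> int (Suc n) \<noteq> d1 + 1 then pair_count n (k1 - 1) k2 (d1 + 1) d2 else 0)
     + (if 0 < k2 \<and> int (Suc n) \<noteq> d2 + 1 then pair_count n k1 (k2 - 1) d1 (d2 + 1) else 0)"
    by (rule pair_count_Suc)
  also have "pair_count n k1 k2 d1 d2 = pair_count n k1 k2 (c1 - 1) (c2 - 1)"
    using pair_count_mirror[of n k1 k2 d1 d2] by (simp add: d1_def d2_def)
  also have "(if 0 < k1 \<and> int (Suc n) \<noteq> d1 + 1 then pair_count n (k1 - 1) k2 (d1 + 1) d2 else 0)
      = (if 0 < k1 \<and> c1 + int k1 \<noteq> 1 then pair_count n (k1 - 1) k2 (c1 - 1) (c2 - 1) else 0)"
    using pair_count_mirror[of n "k1 - 1" k2 "d1 + 1" d2]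
    by (cases "0 < k1") (auto simp: d1_def d2_def of_nat_diff)
  also have "(if 0 < k2 \<and> int (Suc n) \<noteq> d2 + 1 then pair_count n k1 (k2 - 1) d1 (d2 + 1) else 0)
      = (if 0 < k2 \<and> c2 + int k2 \<noteq> 1 then pair_count n k1 (k2 - 1) (c1 - 1) (c2 - 1) else 0)"
    using pair_count_mirror[of n k1 "k2 - 1" d1 "d2 + 1"]
    by (cases "0 < k2") (auto simp: d1_def d2_def of_nat_diff)
  finally show ?thesis .
qed

lemma pair_count_second_offset_beyond:
  assumes "int n \<le> c2" "int n \<le> c2'"
  shows "pair_count n k1 k2 c1 c2 = pair_count n k1 k2 c1 c2'"
proof -
  have "fp_free c X" if "X \<subseteq> {1..n}" "int n \<le> c" for X c
    using that by (intro fp_free_if_below) force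
  then have "fp_free_pairs n k1 k2 c1 c2 = fp_free_pairs n k1 k2 c1 c2'"
    using assms unfolding fp_free_pairs_def by blast
  then show ?thesis by (simp add: pair_count_def)
qed

lemma pair_count_shift_first_step_inner:
  assumes shift: "\<And>k1 k2 c1 c2. 0 \<le> c1 \<Longrightarrow> c1 + int k1 + 1 \<le> c2 \<Longrightarrow> c2 \<le> int n \<Longrightarrow>
      pair_count n k1 k2 (c1 + 1) c2 = pair_count n k1 k2 c1 c2"
    and "0 \<le> c1" "c1 + int k1 + 1 \<le> c2" "c2 \<le> int n"
  shows "pair_count (Suc n) k1 k2 (c1 + 1) c2 = pair_count (Suc n) k1 k2 c1 c2"
proof -
  have "pair_count n k1 k2 (c1 + 1) c2 = pair_count n k1 k2 c1 c2"
    using shift assms(2-4) by simp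
  moreover have "(if 0 < k1 \<and> int (Suc n) \<noteq> c1 + 1 + 1 then pair_count n (k1 - 1) k2 (c1 + 1 + 1) c2 else 0)
      = (if 0 < k1 \<and> int (Suc n) \<noteq> c1 + 1 then pair_count n (k1 - 1) k2 (c1 + 1) c2 else 0)"
    using shift[of "c1 + 1" "k1 - 1" c2 k2] assms(2-4) by (auto simp: of_nat_diff)
  moreover have "(if 0 < k2 \<and> int (Suc n) \<noteq> c2 + 1 then pair_count n k1 (k2 - 1) (c1 + 1) (c2 + 1) else 0)
      = (if 0 < k2 \<and> int (Suc n) \<noteq> c2 + 1 then pair_count n k1 (k2 - 1) c1 (c2 + 1) else 0)"
    using shift[of c1 k1 "c2 + 1" "k2 - 1"] assms(2-4) by auto
  ultimately show ?thesis
    unfolding pair_count_Suc by simp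
qed

lemma pair_count_shift_first_step_top:
  assumes shift: "\<And>k1 k2 c1 c2. 0 \<le> c1 \<Longrightarrow> c1 + int k1 + 1 \<le> c2 \<Longrightarrow> c2 \<le> int n \<Longrightarrow>
      pair_count n k1 k2 (c1 + 1) c2 = pair_count n k1 k2 c1 c2"
    and c1: "0 \<le> c1" and gap: "c1 + int k1 \<le> int n"
  shows "pair_count (Suc n) k1 k2 (c1 + 1) (int (Suc n)) = pair_count (Suc n) k1 k2 c1 (int (Suc n))"
proof -
  have beyond: "pair_count n k1' k2' e (int (Suc n)) = pair_count n k1' k2' e (int n)"
    "pair_count n k1' k2' e (int (Suc n) + 1) = pair_count n k1' k2' e (int n)" for k1' k2' e
    by (rule pair_count_second_offset_beyond; simp)+
  show ?thesis
  proof (cases "c1 + int k1 = int n")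
    case False
    then have "pair_count n k1 k2 (c1 + 1) (int n) = pair_count n k1 k2 c1 (int n)"
      "pair_count n k1 (k2 - 1) (c1 + 1) (int n) = pair_count n k1 (k2 - 1) c1 (int n)"
      "0 < k1 \<Longrightarrow> pair_count n (k1 - 1) k2 (c1 + 1 + 1) (int n) = pair_count n (k1 - 1) k2 (c1 + 1) (int n)"
      using shift[of c1 k1 "int n"] shift[of c1 k1 "int n" "k2 - 1"] shift[of "c1 + 1" "k1 - 1" "int n" k2]
        c1 gap by (simp_all add: of_nat_diff)
    then show ?thesis
      unfolding pair_count_Suc beyond using False gap by (cases "0 < k1"; cases "0 < k2") simp_all
  next
    case True
    have "0 < k1 \<Longrightarrow> pair_count n (k1 - 1) k2 c1 (int n) = pair_count n (k1 - 1) k2 (c1 + 1) (int n)"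
      using shift[of c1 "k1 - 1" "int n" k2] c1 True by (simp add: of_nat_diff)
    then show ?thesis
      using c1 True unfolding pair_count_Suc_bottom[of n k1 k2 "c1 + 1"] pair_count_Suc[of n k1 k2 c1]
        beyond by (cases "0 < k1"; cases "0 < k2") simp_all
  qed
qed

lemma pair_count_shift_first:
  "0 \<le> c1 \<Longrightarrow> c1 + int k1 + 1 \<le> c2 \<Longrightarrow> c2 \<le> int n \<Longrightarrow>
    pair_count n k1 k2 (c1 + 1) c2 = pair_count n k1 k2 c1 c2"
proof (induction n arbitrary: k1 k2 c1 c2)
  case (Suc n)
  show ?case
  proof (cases "c2 \<le> int n")
    case True
    then show ?thesis using pair_count_shift_first_step_inner[OF Suc.IH Suc.prems(1,2)] by blast
  next
    case False
    then have "c2 = int (Suc n)" using Suc.prems(3) by simp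
    then show ?thesis using pair_count_shift_first_step_top[OF Suc.IH] Suc.prems(1,2) by simp
  qed
qed simp

lemma pair_count_first_offset_zero:
  "int d + int k1 \<le> c2 \<Longrightarrow> c2 \<le> int n \<Longrightarrow> pair_count n k1 k2 (int d) c2 = pair_count n k1 k2 0 c2"
proof (induction d)
  case (Suc d)
  then show ?case
    using pair_count_shift_first[of "int d" k1 c2 n k2] by (simp add: add.commute)
qed simp

text \<open>Both offsets can be normalised: push the first block down to \<open>0\<close>, mirror and swap so that
  the second block becomes the first one, push it down as well, and mirror and swap back.\<close>

lemma pair_count_normalize_offsets:
  assumes "m \<le> s"
  shows "pair_count (k1 + k2 + s) k1 k2 (int m) (int (k1 + s)) = pair_count (k1 + k2 + s) k1 k2 0 (int k1)"
proof -
  let ?n = "k1 + k2 + s"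
  have "pair_count ?n k1 k2 (int m) (int (k1 + s)) = pair_count ?n k1 k2 0 (int (k1 + s))"
    by (rule pair_count_first_offset_zero) (use assms in auto)
  also have "\<dots> = pair_count ?n k2 k1 0 (int (k2 + s))"
    using pair_count_mirror[of ?n k1 k2 0 "int (k1 + s)"] pair_count_swap[of ?n k1 k2] by simp
  also have "\<dots> = pair_count ?n k2 k1 (int s) (int (k2 + s))"
    by (rule pair_count_first_offset_zero[symmetric]) auto
  also have "\<dots> = pair_count ?n k1 k2 0 (int k1)"
    using pair_count_mirror[of ?n k2 k1 "int s" "int (k2 + s)"] pair_count_swap[of ?n k2 k1] by simp
  finally show ?thesis .
qed

section \<open>Permutations decreasing on blocks\<close>

lemma dec_list_block_image:
  assumes "finite S" "card S = k"
  shows "(\<lambda>i. dec_list S ! (i - c - 1)) ` {c+1..c+k} = S"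
proof -
  have "(\<lambda>i. dec_list S ! (i - c - 1)) ` {c+1..c+k} = (\<lambda>j. dec_list S ! j) ` {..<k}"
  proof (intro equalityI subsetI)
    fix x assume "x \<in> (\<lambda>i. dec_list S ! (i - c - 1)) ` {c+1..c+k}"
    then show "x \<in> (\<lambda>j. dec_list S ! j) ` {..<k}" by (auto intro: image_eqI[of _ _ "i - c - 1" for i])
  next
    fix x assume "x \<in> (\<lambda>j. dec_list S ! j) ` {..<k}"
    then show "x \<in> (\<lambda>i. dec_list S ! (i - c - 1)) ` {c+1..c+k}"
      by (auto intro: image_eqI[of _ _ "c + 1 + j" for j])
  qed
  also have "\<dots> = S"
    using assms nth_image[of k "dec_list S"] by (simp add: dec_list_basic lessThan_atLeast0)
  finally show ?thesis .
qed

lemma dec_list_block_antimono: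
  assumes "finite S" "card S = k"
  shows "strict_antimono_on {c+1..c+k} (\<lambda>i. dec_list S ! (i - c - 1))"
  unfolding monotone_on_def
proof (intro ballI impI)
  fix i j assume "i \<in> {c+1..c+k}" "j \<in> {c+1..c+k}" "i < j"
  then show "dec_list S ! (j - c - 1) < dec_list S ! (i - c - 1)"
    using assms by (intro dec_list_nth_less) auto
qed

lemma strict_antimono_block_dec_list:
  fixes c k :: nat
  assumes "strict_antimono_on {c+1..c+k} f" "i \<in> {c+1..c+k}"
  shows "f i = dec_list (f ` {c+1..c+k}) ! (i - c - 1)"
  unfolding dec_list_image[OF assms(1)] using assms(2) by (subst nth_map) (auto simp del: upt_Suc)

lemma card_strict_antimono_block:
  fixes c k :: nat and f :: "nat \<Rightarrow> nat"
  assumes "strict_antimono_on {c+1..c+k} f"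
  shows "card (f ` {c+1..c+k}) = k"
proof -
  have "inj_on f {c+1..c+k}" using assms by (simp add: strict_antimono_iff_antimono)
  then show ?thesis by (simp add: card_image)
qed

lemma all_less_iff_ball_block:
  fixes c k :: nat
  shows "(\<forall>j<k. P j) \<longleftrightarrow> (\<forall>i\<in>{c+1..c+k}. P (i - c - 1))"
proof (intro iffI ballI allI impI)
  fix j assume "\<forall>i\<in>{c+1..c+k}. P (i - c - 1)" "j < k"
  moreover have "c + 1 + j \<in> {c+1..c+k}" using \<open>j < k\<close> by auto
  ultimately have "P (c + 1 + j - c - 1)" by blast
  then show "P j" by simp
qed auto

lemma fp_free_iff_block:
  assumes "finite S" "card S = k"
  shows "fp_free (int c) S \<longleftrightarrow> (\<forall>i\<in>{c+1..c+k}. dec_list S ! (i - c - 1) \<noteq> i)"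
proof -
  have "fp_free (int c) S \<longleftrightarrow> (\<forall>i\<in>{c+1..c+k}. dec_list S ! (i - c - 1) \<noteq> c + 1 + (i - c - 1))"
    unfolding fp_free_iff_dec_list[OF assms(1)] assms(2) by (rule all_less_iff_ball_block)
  also have "\<dots> \<longleftrightarrow> (\<forall>i\<in>{c+1..c+k}. dec_list S ! (i - c - 1) \<noteq> i)"
    by (rule ball_cong) auto
  finally show ?thesis .
qed

lemma fp_free_strict_antimono_block:
  fixes c k :: nat and f :: "nat \<Rightarrow> nat"
  assumes "strict_antimono_on {c+1..c+k} f" "\<forall>i\<in>{c+1..c+k}. f i \<noteq> i"
  shows "fp_free (int c) (f ` {c+1..c+k})"
  unfolding fp_free_iff_block[OF finite_imageI[OF finite_atLeastAtMost] card_strict_antimono_block[OF assms(1)]]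
  using assms(2) strict_antimono_block_dec_list[OF assms(1)] by metis

definition block_perms :: "nat \<Rightarrow> nat \<Rightarrow> nat \<Rightarrow> nat \<Rightarrow> (nat \<Rightarrow> nat) set" where
  "block_perms l1 l2 l3 l4 = {\<pi>. \<pi> permutes {1..l1+l2+l3+l4} \<and>
     (\<forall>i\<in>{1..l1+l2+l3+l4}. \<forall>j\<in>{1..l1+l2+l3+l4}. i < j \<and> same_block l1 l2 l3 l4 i j \<longrightarrow> \<pi> i > \<pi> j) \<and>
     (\<forall>i\<in>{1..l1+l2}. \<pi> i \<noteq> i)}"

lemma strict_antimono_on_cong:
  "strict_antimono_on S g \<Longrightarrow> (\<And>i. i \<in> S \<Longrightarrow> f i = g i) \<Longrightarrow> strict_antimono_on S f"
  by (simp add: monotone_on_def)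

lemma block_perms_antimono:
  assumes "\<pi> \<in> block_perms l1 l2 l3 l4"
    and "(c, k) \<in> {(0, l1), (l1, l2), (l1 + l2, l3), (l1 + l2 + l3, l4)}"
  shows "strict_antimono_on {c+1..c+k} \<pi>"
  unfolding monotone_on_def
proof (intro ballI impI)
  fix i j assume ij: "i \<in> {c+1..c+k}" "j \<in> {c+1..c+k}" "i < j"
  have "i \<in> {1..l1+l2+l3+l4}" "j \<in> {1..l1+l2+l3+l4}" "same_block l1 l2 l3 l4 i j"
    using assms(2) ij unfolding same_block_def by auto
  then show "\<pi> j < \<pi> i" using assms(1) ij(3) unfolding block_perms_def by blast
qed

definition block_data :: "nat \<Rightarrow> nat \<Rightarrow> nat \<Rightarrow> nat \<Rightarrow> ((nat set \<times> nat set) \<times> nat set) set" where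
  "block_data l1 l2 l3 l4 = Sigma (fp_free_pairs (l1+l2+l3+l4) l1 l2 0 (int l1))
     (\<lambda>p. {C. C \<subseteq> {1..l1+l2+l3+l4} - (fst p \<union> snd p) \<and> card C = l3})"

text \<open>A permutation decreasing on each block is recovered from the images of the blocks by listing
  each image decreasingly; the image of the last block is the complement of the other three.\<close>

definition block_sets :: "nat \<Rightarrow> nat \<Rightarrow> nat \<Rightarrow> (nat \<Rightarrow> nat) \<Rightarrow> (nat set \<times> nat set) \<times> nat set" where
  "block_sets l1 l2 l3 \<pi> = ((\<pi> ` {1..l1}, \<pi> ` {l1+1..l1+l2}), \<pi> ` {l1+l2+1..l1+l2+l3})"

definition fill_blocks :: "nat \<Rightarrow> nat \<Rightarrow> nat \<Rightarrow> nat \<Rightarrow> (nat set \<times> nat set) \<times> nat set \<Rightarrow> nat \<Rightarrow> nat" where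
  "fill_blocks l1 l2 l3 l4 = (\<lambda>((A, B), C) i.
     if i \<in> {1..l1} then dec_list A ! (i - 1)
     else if i \<in> {l1+1..l1+l2} then dec_list B ! (i - l1 - 1)
     else if i \<in> {l1+l2+1..l1+l2+l3} then dec_list C ! (i - (l1+l2) - 1)
     else if i \<in> {l1+l2+l3+1..l1+l2+l3+l4}
       then dec_list ({1..l1+l2+l3+l4} - (A \<union> B \<union> C)) ! (i - (l1+l2+l3) - 1)
     else i)"

lemma block_sets_mem:
  assumes "\<pi> \<in> block_perms l1 l2 l3 l4"
  shows "block_sets l1 l2 l3 \<pi> \<in> block_data l1 l2 l3 l4"
proof -
  let ?a = "l1 + l2 + l3 + l4"
  have perm: "\<pi> permutes {1..?a}" and no_fix: "\<forall>i\<in>{1..l1+l2}. \<pi> i \<noteq> i"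
    using assms unfolding block_perms_def by auto
  have anti: "strict_antimono_on {0+1..0+l1} \<pi>" "strict_antimono_on {l1+1..l1+l2} \<pi>"
    "strict_antimono_on {l1+l2+1..l1+l2+l3} \<pi>"
    by (rule block_perms_antimono[OF assms]; simp)+
  have "\<pi> ` {1..?a} = {1..?a}" using permutes_image[OF perm] .
  moreover have "inj \<pi>" using permutes_inj[OF perm] .
  moreover have "fp_free (int 0) (\<pi> ` {0+1..0+l1})" "fp_free (int l1) (\<pi> ` {l1+1..l1+l2})"
    using no_fix by (intro fp_free_strict_antimono_block anti; auto)+
  moreover have "card (\<pi> ` {0+1..0+l1}) = l1" "card (\<pi> ` {l1+1..l1+l2}) = l2"
    "card (\<pi> ` {l1+l2+1..l1+l2+l3}) = l3"
    by (rule card_strict_antimono_block, rule anti)+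
  ultimately show ?thesis
    unfolding block_sets_def block_data_def fp_free_pairs_def by (auto simp: inj_eq)
qed

lemma blocks_cover:
  fixes l1 l2 l3 l4 :: nat
  shows "{1..l1+l2+l3+l4} = {0+1..0+l1} \<union> {l1+1..l1+l2} \<union> {l1+l2+1..l1+l2+l3} \<union> {l1+l2+l3+1..l1+l2+l3+l4}"
  by auto

context
  fixes l1 l2 l3 l4 :: nat and A B C D :: "nat set" and \<psi> :: "nat \<Rightarrow> nat"
  assumes data: "((A, B), C) \<in> block_data l1 l2 l3 l4"
  defines "D \<equiv> {1..l1+l2+l3+l4} - (A \<union> B \<union> C)" and "\<psi> \<equiv> fill_blocks l1 l2 l3 l4 ((A, B), C)"
begin

lemma block_data_facts:
  shows "finite A" "finite B" "finite C" "finite D"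
    and "card A = l1" "card B = l2" "card C = l3" "card D = l4"
    and "fp_free 0 A" "fp_free (int l1) B"
    and "A \<union> B \<union> C \<union> D = {1..l1+l2+l3+l4}"
proof -
  have h: "A \<subseteq> {1..l1+l2+l3+l4}" "B \<subseteq> {1..l1+l2+l3+l4}" "A \<inter> B = {}" "card A = l1" "card B = l2"
    "fp_free 0 A" "fp_free (int l1) B" "C \<subseteq> {1..l1+l2+l3+l4} - (A \<union> B)" "card C = l3"
    using data unfolding block_data_def fp_free_pairs_def by auto
  show fin: "finite A" "finite B" "finite C" "finite D"
    using h unfolding D_def by (auto intro: finite_subset)
  show "card A = l1" "card B = l2" "card C = l3" "fp_free 0 A" "fp_free (int l1) B"
    using h by auto
  show "A \<union> B \<union> C \<union> D = {1..l1+l2+l3+l4}" using h unfolding D_def by auto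
  have "card (A \<union> B) = l1 + l2" using h fin by (simp add: card_Un_disjoint)
  moreover have "(A \<union> B) \<inter> C = {}" using h by auto
  ultimately have "card (A \<union> B \<union> C) = l1 + l2 + l3" using h fin by (simp add: card_Un_disjoint)
  moreover have "A \<union> B \<union> C \<subseteq> {1..l1+l2+l3+l4}" using h by auto
  ultimately show "card D = l4"
    using fin unfolding D_def by (simp add: card_Diff_subset)
qed

lemma fill_blocks_on_blocks:
  shows "i \<in> {0+1..0+l1} \<Longrightarrow> \<psi> i = dec_list A ! (i - 0 - 1)"
    and "i \<in> {l1+1..l1+l2} \<Longrightarrow> \<psi> i = dec_list B ! (i - l1 - 1)"
    and "i \<in> {l1+l2+1..l1+l2+l3} \<Longrightarrow> \<psi> i = dec_list C ! (i - (l1+l2) - 1)"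
    and "i \<in> {l1+l2+l3+1..l1+l2+l3+l4} \<Longrightarrow> \<psi> i = dec_list D ! (i - (l1+l2+l3) - 1)"
    and "i \<notin> {1..l1+l2+l3+l4} \<Longrightarrow> \<psi> i = i"
  unfolding \<psi>_def D_def fill_blocks_def by auto

lemma fill_blocks_images:
  shows "\<psi> ` {0+1..0+l1} = A" "\<psi> ` {l1+1..l1+l2} = B" "\<psi> ` {l1+l2+1..l1+l2+l3} = C"
    and "\<psi> ` {l1+l2+l3+1..l1+l2+l3+l4} = D"
  by (simp_all only: image_cong[OF refl fill_blocks_on_blocks(1)] image_cong[OF refl fill_blocks_on_blocks(2)]
      image_cong[OF refl fill_blocks_on_blocks(3)] image_cong[OF refl fill_blocks_on_blocks(4)])
    (rule dec_list_block_image; use block_data_facts in simp)+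

lemma fill_blocks_permutes: "\<psi> permutes {1..l1+l2+l3+l4}"
proof (rule bij_imp_permutes)
  have image: "\<psi> ` {1..l1+l2+l3+l4} = {1..l1+l2+l3+l4}"
    by (subst (1) blocks_cover) (simp only: image_Un fill_blocks_images block_data_facts(11))
  moreover have "inj_on \<psi> {1..l1+l2+l3+l4}"
    by (rule eq_card_imp_inj_on) (simp_all only: image finite_atLeastAtMost)
  ultimately show "bij_betw \<psi> {1..l1+l2+l3+l4} {1..l1+l2+l3+l4}"
    by (simp add: bij_betw_def)
qed (rule fill_blocks_on_blocks(5))

lemma fill_blocks_antimono:
  shows "strict_antimono_on {0+1..0+l1} \<psi>" "strict_antimono_on {l1+1..l1+l2} \<psi>"
    and "strict_antimono_on {l1+l2+1..l1+l2+l3} \<psi>" "strict_antimono_on {l1+l2+l3+1..l1+l2+l3+l4} \<psi>"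
  by (rule strict_antimono_on_cong[OF dec_list_block_antimono fill_blocks_on_blocks(1)]
      strict_antimono_on_cong[OF dec_list_block_antimono fill_blocks_on_blocks(2)]
      strict_antimono_on_cong[OF dec_list_block_antimono fill_blocks_on_blocks(3)]
      strict_antimono_on_cong[OF dec_list_block_antimono fill_blocks_on_blocks(4)];
      simp add: block_data_facts)+

lemma fill_blocks_mem: "\<psi> \<in> block_perms l1 l2 l3 l4"
proof -
  have "\<psi> j < \<psi> i" if "i \<in> {1..l1+l2+l3+l4}" "j \<in> {1..l1+l2+l3+l4}" "i < j" "same_block l1 l2 l3 l4 i j"
    for i j
    using that fill_blocks_antimono unfolding same_block_def monotone_on_def by auto
  moreover have "\<psi> i \<noteq> i" if "i \<in> {1..l1+l2}" for i
  proof (cases "i \<le> l1")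
    case True
    then show ?thesis using that fill_blocks_on_blocks(1) fp_free_iff_block[of A l1 0] block_data_facts
      by auto
  next
    case False
    then show ?thesis using that fill_blocks_on_blocks(2) fp_free_iff_block[of B l2 l1] block_data_facts
      by auto
  qed
  ultimately show ?thesis
    unfolding block_perms_def using fill_blocks_permutes by auto
qed

lemma block_sets_fill_blocks: "block_sets l1 l2 l3 \<psi> = ((A, B), C)"
  using fill_blocks_images by (simp add: block_sets_def)

end

lemma fill_blocks_block_sets:
  assumes \<pi>: "\<pi> \<in> block_perms l1 l2 l3 l4"
  shows "fill_blocks l1 l2 l3 l4 (block_sets l1 l2 l3 \<pi>) = \<pi>"
proof
  fix i
  let ?A = "\<pi> ` {0+1..0+l1}" and ?B = "\<pi> ` {l1+1..l1+l2}" and ?C = "\<pi> ` {l1+l2+1..l1+l2+l3}"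
  have perm: "\<pi> permutes {1..l1+l2+l3+l4}" using \<pi> unfolding block_perms_def by auto
  have "{1..l1+l2+l3+l4} = ?A \<union> ?B \<union> ?C \<union> \<pi> ` {l1+l2+l3+1..l1+l2+l3+l4}"
    using permutes_image[OF perm] by (subst (asm) blocks_cover) (simp add: image_Un)
  moreover have "\<pi> ` {l1+l2+l3+1..l1+l2+l3+l4} \<inter> (?A \<union> ?B \<union> ?C) = {}"
    using permutes_inj[OF perm] by (auto simp: inj_eq)
  ultimately have D: "{1..l1+l2+l3+l4} - (?A \<union> ?B \<union> ?C) = \<pi> ` {l1+l2+l3+1..l1+l2+l3+l4}"
    by blast
  have anti: "strict_antimono_on {c+1..c+k} \<pi>"
    if "(c, k) \<in> {(0, l1), (l1, l2), (l1 + l2, l3), (l1 + l2 + l3, l4)}" for c k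
    using block_perms_antimono[OF \<pi> that] .
  consider "i \<in> {0+1..0+l1}" | "i \<in> {l1+1..l1+l2}" | "i \<in> {l1+l2+1..l1+l2+l3}"
    | "i \<in> {l1+l2+l3+1..l1+l2+l3+l4}" | "i \<notin> {1..l1+l2+l3+l4}"
    by (metis Un_iff blocks_cover)
  then show "fill_blocks l1 l2 l3 l4 (block_sets l1 l2 l3 \<pi>) i = \<pi> i"
  proof cases
    case 1
    then show ?thesis
      using strict_antimono_block_dec_list[OF anti[of 0 l1] 1] by (simp add: fill_blocks_def block_sets_def)
  next
    case 2
    then show ?thesis
      using strict_antimono_block_dec_list[OF anti[of l1 l2] 2] by (simp add: fill_blocks_def block_sets_def)
  next
    case 3
    then show ?thesis
      using strict_antimono_block_dec_list[OF anti[of "l1+l2" l3] 3] by (simp add: fill_blocks_def block_sets_def)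
  next
    case 4
    then show ?thesis
      using strict_antimono_block_dec_list[OF anti[of "l1+l2+l3" l4] 4] D
      by (simp add: fill_blocks_def block_sets_def)
  next
    case 5
    then show ?thesis
      using permutes_not_in[OF perm 5] by (auto simp: fill_blocks_def block_sets_def)
  qed
qed

lemma card_block_data:
  "card (block_data l1 l2 l3 l4) = (l3 + l4 choose l3) * pair_count (l1+l2+l3+l4) l1 l2 0 (int l1)"
proof -
  let ?a = "l1 + l2 + l3 + l4"
  have choices: "card {C. C \<subseteq> {1..?a} - (A \<union> B) \<and> card C = l3} = (l3 + l4 choose l3)"
    if "(A, B) \<in> fp_free_pairs ?a l1 l2 0 (int l1)" for A B
  proof -
    have h: "A \<subseteq> {1..?a}" "B \<subseteq> {1..?a}" "A \<inter> B = {}" "card A = l1" "card B = l2"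
      using that unfolding fp_free_pairs_def by auto
    then have "finite A" "finite B" by (auto intro: finite_subset)
    then have "card ({1..?a} - (A \<union> B)) = l3 + l4"
      using h by (simp add: card_Un_disjoint card_Diff_subset)
    then show ?thesis by (simp add: n_subsets)
  qed
  have "card (block_data l1 l2 l3 l4) = (\<Sum>p\<in>fp_free_pairs ?a l1 l2 0 (int l1).
      card {C. C \<subseteq> {1..?a} - (fst p \<union> snd p) \<and> card C = l3})"
    unfolding block_data_def by (rule card_SigmaI) (auto simp: finite_fp_free_pairs)
  also have "\<dots> = (\<Sum>p\<in>fp_free_pairs ?a l1 l2 0 (int l1). l3 + l4 choose l3)"
    by (rule sum.cong[OF refl]) (metis choices prod.collapse)
  finally show ?thesis by (simp add: pair_count_def)
qed

lemma Ncount_eq_pair_count: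
  "Ncount l1 l2 l3 l4 = (l3 + l4 choose l3) * pair_count (l1+l2+l3+l4) l1 l2 0 (int l1)"
proof -
  have "bij_betw (block_sets l1 l2 l3) (block_perms l1 l2 l3 l4) (block_data l1 l2 l3 l4)"
  proof (rule bij_betw_byWitness[where f' = "fill_blocks l1 l2 l3 l4"])
    show "block_sets l1 l2 l3 ` block_perms l1 l2 l3 l4 \<subseteq> block_data l1 l2 l3 l4"
      using block_sets_mem by blast
    show "fill_blocks l1 l2 l3 l4 ` block_data l1 l2 l3 l4 \<subseteq> block_perms l1 l2 l3 l4"
      using fill_blocks_mem by auto
    show "\<forall>\<pi>\<in>block_perms l1 l2 l3 l4. fill_blocks l1 l2 l3 l4 (block_sets l1 l2 l3 \<pi>) = \<pi>"
      using fill_blocks_block_sets by blast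
    show "\<forall>x\<in>block_data l1 l2 l3 l4. block_sets l1 l2 l3 (fill_blocks l1 l2 l3 l4 x) = x"
      using block_sets_fill_blocks by auto
  qed
  then have "card (block_perms l1 l2 l3 l4) = card (block_data l1 l2 l3 l4)"
    by (rule bij_betw_same_card)
  then show ?thesis
    by (simp add: Ncount_def block_perms_def card_block_data)
qed

section \<open>The pairs counted by \<open>F\<close>\<close>

lemma blocksort_eq_dec_lists:
  assumes "distinct w"
  shows "blocksort a1 w = dec_list (set (take a1 w)) @ dec_list (set (drop a1 w))"
proof -
  have "distinct (take a1 w)" "distinct (drop a1 w)" using assms by auto
  then show ?thesis
    unfolding blocksort_def dec_list_def by (simp add: sorted_list_of_set_sort_remdups distinct_remdups_id)
qed

lemma fixed_point_free_append:
  assumes "length L1 = k1" "length L2 = k2"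
  shows "(\<forall>i\<in>{1..k1+k2}. (L1 @ L2) ! (i - 1) \<noteq> i) \<longleftrightarrow>
    (\<forall>i\<in>{0+1..0+k1}. L1 ! (i - 0 - 1) \<noteq> i) \<and> (\<forall>i\<in>{k1+1..k1+k2}. L2 ! (i - k1 - 1) \<noteq> i)"
proof -
  have "{1..k1+k2} = {0+1..0+k1} \<union> {k1+1..k1+k2}" by auto
  moreover have "(L1 @ L2) ! (i - 1) = L1 ! (i - 0 - 1)" if "i \<in> {0+1..0+k1}" for i
    using that assms by (auto simp: nth_append)
  moreover have "(L1 @ L2) ! (i - 1) = L2 ! (i - k1 - 1)" if "i \<in> {k1+1..k1+k2}" for i
    using that assms by (auto simp: nth_append)
  ultimately show ?thesis by (metis (no_types, lifting) Un_iff)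
qed

lemma blocksort_fixed_point_free_iff:
  assumes "distinct w" "length w = a1 + a2"
  shows "(\<forall>i\<in>{1..a1+a2}. blocksort a1 w ! (i - 1) \<noteq> i) \<longleftrightarrow>
    fp_free 0 (set (take a1 w)) \<and> fp_free (int a1) (set (drop a1 w))"
proof -
  have card: "card (set (take a1 w)) = a1" "card (set (drop a1 w)) = a2"
    using assms by (simp_all add: distinct_card)
  then have len: "length (dec_list (set (take a1 w))) = a1" "length (dec_list (set (drop a1 w))) = a2"
    by (simp_all add: dec_list_basic)
  show ?thesis
    unfolding blocksort_eq_dec_lists[OF assms(1)] fixed_point_free_append[OF len]
    using fp_free_iff_block[OF _ card(1), of 0] fp_free_iff_block[OF _ card(2), of a1] by simp
qed

definition first_block_choices :: "nat \<Rightarrow> nat \<Rightarrow> nat \<Rightarrow> (nat set \<times> nat set) set" where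
  "first_block_choices a1 a2 s = {(X, W). X \<subseteq> {1..a1+a2} \<and> s \<le> a1+a2 \<and> card X = a1+a2-s \<and>
     W \<subseteq> X \<union> {a1+a2+1..a1+a2+s} \<and> card W = a1 \<and> fp_free 0 W \<and>
     fp_free (int a1) ((X \<union> {a1+a2+1..a1+a2+s}) - W)}"

lemma card_Un_top_block:
  assumes "X \<subseteq> {1..a}" "card X = a - s" "s \<le> a"
  shows "card (X \<union> {a+1..a+s}) = a"
proof -
  have "finite X" using assms(1) finite_subset by blast
  moreover have "X \<inter> {a+1..a+s} = {}" using assms(1) by auto
  ultimately show ?thesis using assms by (simp add: card_Un_disjoint)
qed

lemma first_block_choices_facts:
  assumes "(X, W) \<in> first_block_choices a1 a2 s"
  shows "finite W" "card W = a1"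
    and "finite ((X \<union> {a1+a2+1..a1+a2+s}) - W)" "card ((X \<union> {a1+a2+1..a1+a2+s}) - W) = a2"
proof -
  have h: "X \<subseteq> {1..a1+a2}" "s \<le> a1+a2" "card X = a1+a2-s" "W \<subseteq> X \<union> {a1+a2+1..a1+a2+s}"
    "card W = a1"
    using assms unfolding first_block_choices_def by auto
  have fin: "finite (X \<union> {a1+a2+1..a1+a2+s})" using h(1) finite_subset by auto
  then show "finite W" using h(4) finite_subset by blast
  show "card W = a1" by (fact h(5))
  show "finite ((X \<union> {a1+a2+1..a1+a2+s}) - W)" using fin by simp
  show "card ((X \<union> {a1+a2+1..a1+a2+s}) - W) = a2"
    using card_Un_top_block[OF h(1,3,2)] h(4,5) fin by (simp add: card_Diff_subset finite_subset)
qed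

lemma finite_first_block_choices: "finite (first_block_choices a1 a2 s)"
proof (rule finite_subset)
  show "first_block_choices a1 a2 s \<subseteq> Pow {1..a1+a2+s} \<times> Pow {1..a1+a2+s}"
    unfolding first_block_choices_def by fastforce
qed simp

definition F_pairs :: "nat \<Rightarrow> nat \<Rightarrow> nat \<Rightarrow> (nat set \<times> nat list) set" where
  "F_pairs a1 a2 s = {(X, w). X \<subseteq> {1..a1+a2} \<and> s \<le> a1+a2 \<and> card X = a1+a2 - s \<and>
     length w = a1+a2 \<and> distinct w \<and> set w = X \<union> {a1+a2+1..a1+a2+s} \<and>
     (\<forall>i\<in>{1..a1+a2}. blocksort a1 w ! (i - 1) \<noteq> i)}"

text \<open>A pair \<open>(X, w)\<close> counted by \<open>F\<close> is determined by \<open>X\<close>, the set \<open>W\<close> of the first \<open>a1\<close> entries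
  of \<open>w\<close>, and the orders in which \<open>W\<close> and its complement are listed; only the sets matter for
  the fixed point condition.\<close>

definition ordered_choices :: "nat \<Rightarrow> nat \<Rightarrow> nat \<Rightarrow> ((nat set \<times> nat set) \<times> nat list \<times> nat list) set" where
  "ordered_choices a1 a2 s = Sigma (first_block_choices a1 a2 s)
     (\<lambda>p. permutations_of_set (snd p) \<times> permutations_of_set ((fst p \<union> {a1+a2+1..a1+a2+s}) - snd p))"

lemma card_ordered_choices:
  "card (ordered_choices a1 a2 s) = fact a1 * fact a2 * card (first_block_choices a1 a2 s)"
proof -
  let ?Hi = "{a1+a2+1..a1+a2+s}"
  have "card (ordered_choices a1 a2 s) = (\<Sum>p\<in>first_block_choices a1 a2 s.
      card (permutations_of_set (snd p) \<times> permutations_of_set ((fst p \<union> ?Hi) - snd p)))"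
    unfolding ordered_choices_def
    by (rule card_SigmaI) (simp_all add: finite_first_block_choices finite_permutations_of_set)
  also have "\<dots> = (\<Sum>p\<in>first_block_choices a1 a2 s. fact a1 * fact a2)"
  proof (rule sum.cong[OF refl])
    fix p assume "p \<in> first_block_choices a1 a2 s"
    then obtain X W where "p = (X, W)" "(X, W) \<in> first_block_choices a1 a2 s" by (cases p) auto
    then show "card (permutations_of_set (snd p) \<times> permutations_of_set ((fst p \<union> ?Hi) - snd p))
        = fact a1 * fact a2"
      using first_block_choices_facts by (simp add: card_cartesian_product)
  qed
  finally show ?thesis by simp
qed

lemma concat_ordered_choice_mem:
  assumes "((X, W), (p, q)) \<in> ordered_choices a1 a2 s"
  shows "(X, p @ q) \<in> F_pairs a1 a2 s"
proof -
  have XW: "(X, W) \<in> first_block_choices a1 a2 s"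
    and pq: "set p = W" "distinct p" "set q = (X \<union> {a1+a2+1..a1+a2+s}) - W" "distinct q"
    using assms unfolding ordered_choices_def permutations_of_set_def by auto
  have len: "length p = a1" "length q = a2"
    using pq first_block_choices_facts[OF XW] distinct_card by metis+
  moreover have "distinct (p @ q)" "set (p @ q) = X \<union> {a1+a2+1..a1+a2+s}"
    using pq XW unfolding first_block_choices_def by auto
  moreover have "\<forall>i\<in>{1..a1+a2}. blocksort a1 (p @ q) ! (i - 1) \<noteq> i"
    using blocksort_fixed_point_free_iff[of "p @ q" a1 a2] len pq XW
    unfolding first_block_choices_def by auto
  ultimately show ?thesis using XW unfolding first_block_choices_def F_pairs_def by auto
qed

lemma split_F_pair_mem:
  assumes "(X, w) \<in> F_pairs a1 a2 s"
  shows "((X, set (take a1 w)), (take a1 w, drop a1 w)) \<in> ordered_choices a1 a2 s"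
proof -
  let ?Hi = "{a1+a2+1..a1+a2+s}"
  have h: "X \<subseteq> {1..a1+a2}" "s \<le> a1+a2" "card X = a1+a2-s" "length w = a1+a2" "distinct w"
    "set w = X \<union> ?Hi" "\<forall>i\<in>{1..a1+a2}. blocksort a1 w ! (i - 1) \<noteq> i"
    using assms unfolding F_pairs_def by auto
  have "set w = set (take a1 w) \<union> set (drop a1 w)" "set (take a1 w) \<inter> set (drop a1 w) = {}"
    using h(5) by (metis append_take_drop_id set_append, metis append_take_drop_id distinct_append)
  then have rest: "set (drop a1 w) = (X \<union> ?Hi) - set (take a1 w)" using h(6) by auto
  have "(X, set (take a1 w)) \<in> first_block_choices a1 a2 s"
    using h blocksort_fixed_point_free_iff[OF h(5,4)] rest set_take_subset[of a1 w]
    unfolding first_block_choices_def by (auto simp: distinct_card)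
  then show ?thesis
    using rest h(5) unfolding ordered_choices_def permutations_of_set_def by auto
qed

lemma F_eq_fact_card_first_block_choices:
  "F a1 a2 s = fact a1 * fact a2 * card (first_block_choices a1 a2 s)"
proof -
  let ?concat = "\<lambda>((X, W), (p, q)). (X, p @ q)"
  let ?split = "\<lambda>(X, w). ((X, set (take a1 w)), (take a1 w, drop a1 w))"
  have "bij_betw ?concat (ordered_choices a1 a2 s) (F_pairs a1 a2 s)"
  proof (rule bij_betw_byWitness[where f' = ?split])
    show "\<forall>z\<in>ordered_choices a1 a2 s. ?split (?concat z) = z"
    proof
      fix z assume "z \<in> ordered_choices a1 a2 s"
      then obtain X W p q where z: "z = ((X, W), (p, q))" "(X, W) \<in> first_block_choices a1 a2 s"
        "set p = W" "distinct p"
        unfolding ordered_choices_def permutations_of_set_def by auto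
      then have "length p = a1" using first_block_choices_facts(2) distinct_card by metis
      then show "?split (?concat z) = z" using z by simp
    qed
  qed (use concat_ordered_choice_mem split_F_pair_mem in auto)
  then have "card (F_pairs a1 a2 s) = card (ordered_choices a1 a2 s)"
    by (simp add: bij_betw_same_card)
  then show ?thesis
    unfolding F_def Let_def F_pairs_def card_ordered_choices by simp
qed

definition split_choices :: "nat \<Rightarrow> nat \<Rightarrow> nat \<Rightarrow> (nat \<times> nat set \<times> nat set \<times> nat set) set" where
  "split_choices a1 a2 s = Sigma {m. m \<le> s \<and> m \<le> a1 \<and> s - m \<le> a2}
     (\<lambda>m. {B. B \<subseteq> {a1+a2+1..a1+a2+s} \<and> card B = m} \<times>
       fp_free_pairs (a1+a2) (a1 - m) (a2 - (s - m)) (int m) (int (a1 - m + s)))"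

lemma card_split_choices:
  "card (split_choices a1 a2 s) = (\<Sum>m | m \<le> s \<and> m \<le> a1 \<and> s - m \<le> a2.
     (s choose m) * pair_count (a1+a2) (a1 - m) (a2 - (s - m)) (int m) (int (a1 - m + s)))"
  unfolding split_choices_def
  by (subst card_SigmaI) (auto simp: card_cartesian_product n_subsets pair_count_def finite_fp_free_pairs)

text \<open>Inside the first block, the entries above \<open>a1 + a2\<close> come first and only push the remaining
  entries of the block up; likewise for the second block.\<close>

lemma split_first_block_choice:
  assumes XW: "(X, W) \<in> first_block_choices a1 a2 s"
  defines "Hi \<equiv> {a1+a2+1..a1+a2+s}"
  shows "(card (W \<inter> Hi), W \<inter> Hi, W - Hi, X - W) \<in> split_choices a1 a2 s"
proof -
  have h: "X \<subseteq> {1..a1+a2}" "W \<subseteq> X \<union> Hi" "card W = a1" "fp_free 0 W" "fp_free (int a1) ((X \<union> Hi) - W)"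
    using XW unfolding first_block_choices_def Hi_def by auto
  define m where "m = card (W \<inter> Hi)"
  have fin: "finite X" "finite Hi" using h(1) finite_subset unfolding Hi_def by auto
  have low: "\<forall>x\<in>X. x \<le> a1 + a2" and high: "\<forall>b\<in>Hi. a1 + a2 < b" using h(1) unfolding Hi_def by auto
  have W: "W = (W \<inter> Hi) \<union> (W - Hi)" and R: "(X \<union> Hi) - W = (Hi - W) \<union> (X - W)" by auto
  have "finite W" using fin h(2) finite_subset by auto
  then have "card W = m + card (W - Hi)"
    unfolding m_def by (rule card_Int_Diff)
  then have m_le: "m \<le> a1" and card_low: "card (W - Hi) = a1 - m" using h(3) by auto
  have "m \<le> card Hi" unfolding m_def using fin by (intro card_mono) auto
  then have m_le_s: "m \<le> s" unfolding Hi_def by simp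
  have card_Hi_W: "card (Hi - W) = s - m"
    using fin unfolding m_def by (simp add: card_Diff_subset_Int Int_commute Hi_def)
  have "card ((X \<union> Hi) - W) = (s - m) + card (X - W)"
    using fin card_Hi_W high low by (subst R, subst card_Un_disjoint) force+
  then have sm_le: "s - m \<le> a2" and card_X_W: "card (X - W) = a2 - (s - m)"
    using first_block_choices_facts(4)[OF XW] unfolding Hi_def by auto
  have "fp_free 0 W \<longleftrightarrow> fp_free (int m) (W - Hi)"
    using fin high low h(2) m_le unfolding m_def
    by (subst W, subst fp_free_Un_high[where n = "a1 + a2"]) (auto intro: finite_subset)
  moreover have "fp_free (int a1) ((X \<union> Hi) - W) \<longleftrightarrow> fp_free (int (a1 - m + s)) (X - W)"
    using fin high low card_Hi_W sm_le m_le_s m_le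
    by (subst R, subst fp_free_Un_high[where n = "a1 + a2"]) (auto simp: algebra_simps)
  ultimately have "(W - Hi, X - W) \<in> fp_free_pairs (a1+a2) (a1 - m) (a2 - (s - m)) (int m) (int (a1 - m + s))"
    using h card_low card_X_W unfolding fp_free_pairs_def by auto
  then show ?thesis
    using m_le m_le_s sm_le unfolding split_choices_def m_def Hi_def by auto
qed

lemma split_choices_memD:
  assumes "(m, B, X1, X2) \<in> split_choices a1 a2 s"
  shows "m \<le> s" "m \<le> a1" "s - m \<le> a2" "B \<subseteq> {a1+a2+1..a1+a2+s}" "card B = m"
    and "X1 \<subseteq> {1..a1+a2}" "X2 \<subseteq> {1..a1+a2}" "X1 \<inter> X2 = {}"
    and "card X1 = a1 - m" "card X2 = a2 - (s - m)"
    and "fp_free (int m) X1" "fp_free (int (a1 - m + s)) X2"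
proof -
  have "m \<le> s \<and> m \<le> a1 \<and> s - m \<le> a2" "B \<subseteq> {a1+a2+1..a1+a2+s} \<and> card B = m"
    "(X1, X2) \<in> fp_free_pairs (a1+a2) (a1 - m) (a2 - (s - m)) (int m) (int (a1 - m + s))"
    using assms by (simp_all only: split_choices_def mem_Sigma_iff mem_Times_iff mem_Collect_eq fst_conv snd_conv)
  then show "m \<le> s" "m \<le> a1" "s - m \<le> a2" "B \<subseteq> {a1+a2+1..a1+a2+s}" "card B = m"
    and "X1 \<subseteq> {1..a1+a2}" "X2 \<subseteq> {1..a1+a2}" "X1 \<inter> X2 = {}"
    and "card X1 = a1 - m" "card X2 = a2 - (s - m)"
    and "fp_free (int m) X1" "fp_free (int (a1 - m + s)) X2"
    unfolding fp_free_pairs_def by blast+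
qed

lemma join_split_choice:
  assumes "(m, B, X1, X2) \<in> split_choices a1 a2 s"
  shows "(X1 \<union> X2, X1 \<union> B) \<in> first_block_choices a1 a2 s"
proof -
  let ?Hi = "{a1+a2+1..a1+a2+s}"
  note h = split_choices_memD[OF assms]
  have fin: "finite X1" "finite X2" "finite B" "finite (?Hi - B)"
    using finite_subset[OF h(6)] finite_subset[OF h(7)] finite_subset[OF h(4)] by simp_all
  have low: "\<forall>x\<in>X1. x \<le> a1 + a2" "\<forall>x\<in>X2. x \<le> a1 + a2" and high: "\<forall>b\<in>?Hi. a1 + a2 < b"
    using h(6,7) by auto
  then have high_B: "\<forall>b\<in>B. a1 + a2 < b" using h(4) by blast
  have card_Hi_B: "card (?Hi - B) = s - m" using h(4,5) fin by (simp add: card_Diff_subset)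
  have card_X: "card (X1 \<union> X2) = a1 + a2 - s" using h fin by (simp add: card_Un_disjoint)
  have "X1 \<inter> B = {}" using low(1) high_B by fastforce
  then have card_W: "card (X1 \<union> B) = a1" using h fin by (simp add: card_Un_disjoint)
  have "fp_free 0 (B \<union> X1) \<longleftrightarrow> fp_free (0 + int (card B)) X1"
    by (rule fp_free_Un_high[OF fin(3,1) low(1) high_B]) (use h in simp)
  then have free_W: "fp_free 0 (X1 \<union> B)" using h(5,11) by (simp add: sup_commute)
  have "X1 \<inter> ?Hi = {}" "X2 \<inter> ?Hi = {}" using low high by fastforce+
  then have rest: "(X1 \<union> X2 \<union> ?Hi) - (X1 \<union> B) = (?Hi - B) \<union> X2" using h(4,8) by blast
  have "fp_free (int a1) ((?Hi - B) \<union> X2) \<longleftrightarrow> fp_free (int a1 + int (card (?Hi - B))) X2"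
    by (rule fp_free_Un_high[OF fin(4,2) low(2)]) (use high card_Hi_B h in auto)
  moreover have "int a1 + int (card (?Hi - B)) = int (a1 - m + s)" using card_Hi_B h(1,2) by simp
  ultimately have free_rest: "fp_free (int a1) ((?Hi - B) \<union> X2)" using h(12) by simp
  show ?thesis
    using h card_X card_W free_W rest free_rest unfolding first_block_choices_def by auto
qed

lemma card_first_block_choices:
  "card (first_block_choices a1 a2 s) = card (split_choices a1 a2 s)"
proof (rule bij_betw_same_card)
  let ?Hi = "{a1+a2+1..a1+a2+s}"
  let ?split = "\<lambda>(X, W). (card (W \<inter> ?Hi), W \<inter> ?Hi, W - ?Hi, X - W)"
  let ?join = "\<lambda>(m, B, X1, X2). (X1 \<union> X2, X1 \<union> B)"
  show "bij_betw ?split (first_block_choices a1 a2 s) (split_choices a1 a2 s)"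
  proof (rule bij_betw_byWitness[where f' = ?join])
    show "\<forall>p\<in>first_block_choices a1 a2 s. ?join (?split p) = p"
      unfolding first_block_choices_def by auto
    show "\<forall>x\<in>split_choices a1 a2 s. ?split (?join x) = x"
    proof
      fix x assume x_mem: "x \<in> split_choices a1 a2 s"
      obtain m B X1 X2 where x: "x = (m, B, X1, X2)" by (metis prod.collapse)
      note h = split_choices_memD[OF x_mem[unfolded x]]
      have "(X1 \<union> B) \<inter> ?Hi = B" "(X1 \<union> B) - ?Hi = X1" "(X1 \<union> X2) - (X1 \<union> B) = X2"
        using h(4,6,7,8) by fastforce+
      then show "?split (?join x) = x" using x h(5) by simp
    qed
  qed (use split_first_block_choice join_split_choice in auto)
qed

lemma Ncount_eq_split_summand:
  assumes "m \<le> s" "m \<le> a1" "s - m \<le> a2"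
  shows "Ncount (a1 - m) (a2 - (s - m)) m (s - m) =
    (s choose m) * pair_count (a1 + a2) (a1 - m) (a2 - (s - m)) (int m) (int (a1 - m + s))"
proof -
  let ?k1 = "a1 - m" and ?k2 = "a2 - (s - m)"
  have n: "?k1 + ?k2 + s = a1 + a2" and "?k1 + ?k2 + m + (s - m) = a1 + a2" "m + (s - m) = s"
    using assms by auto
  then have "Ncount ?k1 ?k2 m (s - m) = (s choose m) * pair_count (a1 + a2) ?k1 ?k2 0 (int ?k1)"
    by (simp add: Ncount_eq_pair_count)
  also have "pair_count (a1 + a2) ?k1 ?k2 0 (int ?k1) = pair_count (a1 + a2) ?k1 ?k2 (int m) (int (?k1 + s))"
    using pair_count_normalize_offsets[OF assms(1), of ?k1 ?k2] unfolding n by simp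
  finally show ?thesis using assms by simp
qed

theorem mainTheorem11:
  fixes a1 a2 s :: nat
  shows "F a1 a2 s = fact a1 * fact a2 * G a1 a2 s"
proof -
  have "G a1 a2 s = card (split_choices a1 a2 s)"
    unfolding G_def card_split_choices by (rule sum.cong[OF refl], rule Ncount_eq_split_summand) auto
  then show ?thesis
    using F_eq_fact_card_first_block_choices card_first_block_choices by simp
qed

end
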